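(* Let $v\ge 2$ be an integer and let $\theta\in[0,1]$. Play the tipsy cop and drunken robber game on the complete graph $K_v$, with the cop and robber starting at distinct vertices. Then the probability that the robber remains free after $m$ moves is \[ P_m(K_v)=\theta^{\lfloor m/2\rfloor}\left(\frac{v-2}{v-1}\right)^m \qquad (m\ge 0). \]
   Context: Tipsy cop and drunken robber game on a finite connected graph $G$: a cop and a robber are placed at distinct vertices. Moves are numbered $1,2,3,\dots$; the robber makes the odd-numbered moves and the cop the even-numbered moves, and on each move the mover must move to a vertex adjacent to its current vertex (staying put is not allowed). The robber always moves to a neighbor chosen uniformly at random. The cop, independently at each of her moves, with probability $\theta$ moves to a neighbor chosen uniformly at random, and with probability $1-\theta$ makes a directed move to a neighbor lying on a shortest path to the robber's current vertex (in particular onto the robber's vertex if it is adjacent). All random choices are independent. The robber is captured (and the game ends) as soon as both occupy the same vertex, whether the robber moves onto the cop or the cop moves onto the robber. $P_m(G)$ denotes the probability that the robber has not been captured during the first $m$ moves ($P_0(G)=1$). *)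

theory Defs
  imports Complex_Main
begin

text \<open>A finite simple graph is given by a vertex set V and a symmetric irreflexive
  adjacency relation E (restricted to V).\<close>

definition nbrs :: "'a set \<Rightarrow> ('a \<Rightarrow> 'a \<Rightarrow> bool) \<Rightarrow> 'a \<Rightarrow> 'a set" where
  "nbrs V E x = {y \<in> V. E x y}"

definition deg :: "'a set \<Rightarrow> ('a \<Rightarrow> 'a \<Rightarrow> bool) \<Rightarrow> 'a \<Rightarrow> nat" where
  "deg V E x = card (nbrs V E x)"

inductive walk_len :: "'a set \<Rightarrow> ('a \<Rightarrow> 'a \<Rightarrow> bool) \<Rightarrow> nat \<Rightarrow> 'a \<Rightarrow> 'a \<Rightarrow> bool"
  for V E where
  walk0: "x \<in> V \<Longrightarrow> walk_len V E 0 x x"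
| walkS: "x \<in> V \<Longrightarrow> y \<in> V \<Longrightarrow> E x y \<Longrightarrow> walk_len V E n y z \<Longrightarrow> walk_len V E (Suc n) x z"

definition gdist :: "'a set \<Rightarrow> ('a \<Rightarrow> 'a \<Rightarrow> bool) \<Rightarrow> 'a \<Rightarrow> 'a \<Rightarrow> nat" where
  "gdist V E x y = (LEAST n. walk_len V E n x y)"

text \<open>A directed-move rule for the cop: at move number i, with cop at c and robber at r,
  it prescribes a neighbour of c lying on a shortest path from c to r.\<close>
definition valid_cop_rule ::
  "'a set \<Rightarrow> ('a \<Rightarrow> 'a \<Rightarrow> bool) \<Rightarrow> (nat \<Rightarrow> 'a \<Rightarrow> 'a \<Rightarrow> 'a) \<Rightarrow> bool" where
  "valid_cop_rule V E \<sigma> \<longleftrightarrow>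
     (\<forall>i c r. c \<in> V \<longrightarrow> r \<in> V \<longrightarrow> c \<noteq> r \<longrightarrow>
        \<sigma> i c r \<in> nbrs V E c \<and> gdist V E (\<sigma> i c r) r + 1 = gdist V E c r)"

text \<open>survive V E \<theta> \<sigma> n i c r: probability that the robber is not captured during the
  next n moves, where i is the number of the next move (odd: robber moves, even: cop moves),
  the cop is at c and the robber at r (c \<noteq> r).\<close>
fun survive ::
  "'a set \<Rightarrow> ('a \<Rightarrow> 'a \<Rightarrow> bool) \<Rightarrow> real \<Rightarrow> (nat \<Rightarrow> 'a \<Rightarrow> 'a \<Rightarrow> 'a) \<Rightarrow> nat \<Rightarrow> nat \<Rightarrow> 'a \<Rightarrow> 'a \<Rightarrow> real"
where
  "survive V E \<theta> \<sigma> 0 i c r = 1"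
| "survive V E \<theta> \<sigma> (Suc n) i c r =
     (if odd i then
        (\<Sum>y\<in>nbrs V E r. if y = c then 0 else survive V E \<theta> \<sigma> n (Suc i) c y) / real (deg V E r)
      else
        \<theta> * ((\<Sum>y\<in>nbrs V E c. if y = r then 0 else survive V E \<theta> \<sigma> n (Suc i) y r) / real (deg V E c))
        + (1 - \<theta>) * (let y = \<sigma> i c r in if y = r then 0 else survive V E \<theta> \<sigma> n (Suc i) y r))"

text \<open>P_m(G) with cop starting at c0, robber at r0; moves are numbered from 1.\<close>
definition P_free ::
  "'a set \<Rightarrow> ('a \<Rightarrow> 'a \<Rightarrow> bool) \<Rightarrow> real \<Rightarrow> (nat \<Rightarrow> 'a \<Rightarrow> 'a \<Rightarrow> 'a) \<Rightarrow> 'a \<Rightarrow> 'a \<Rightarrow> nat \<Rightarrow> real" where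
  "P_free V E \<theta> \<sigma> c0 r0 m = survive V E \<theta> \<sigma> m 1 c0 r0"

definition K_verts :: "nat \<Rightarrow> nat set" where "K_verts v = {0..<v}"
definition K_adj :: "nat \<Rightarrow> nat \<Rightarrow> bool" where "K_adj x y \<longleftrightarrow> x \<noteq> y"

end

theory Submission
  imports Defs
begin

text \<open>In a complete graph the robber is always adjacent to the cop, so a directed cop move
  captures him. Hence the robber survives a cop move only if the cop moves at random (probability
  \<open>\<theta>\<close>) and misses him, and he survives his own move only if he avoids the cop; each such miss
  has probability \<open>(v - 2) / (v - 1)\<close>. After any surviving move the two players again occupy
  distinct vertices, so by symmetry the survival probability is a product of these factors.\<close>

lemma gdist_le_walk_len: "walk_len V E n x y \<Longrightarrow> gdist V E x y \<le> n"
  unfolding gdist_def by (rule Least_le)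

lemma walk_len_gdist: "walk_len V E n x y \<Longrightarrow> walk_len V E (gdist V E x y) x y"
  unfolding gdist_def by (rule LeastI)

lemma walk_len_edge: "x \<in> V \<Longrightarrow> y \<in> V \<Longrightarrow> E x y \<Longrightarrow> walk_len V E 1 x y"
  using walk_len.walkS[OF _ _ _ walk_len.walk0, of x V y E] by simp

lemma walk_len_start_in: "walk_len V E n x y \<Longrightarrow> x \<in> V"
  by (cases rule: walk_len.cases) auto

lemma gdist_eq_0_iff:
  assumes "walk_len V E n x y"
  shows "gdist V E x y = 0 \<longleftrightarrow> x = y"
proof
  assume "gdist V E x y = 0"
  then have "walk_len V E 0 x y" using walk_len_gdist[OF assms] by simp
  then show "x = y" by (cases rule: walk_len.cases) auto
next
  assume "x = y"
  with walk_len_start_in[OF assms] show "gdist V E x y = 0"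
    using gdist_le_walk_len[OF walk_len.walk0, of x V E] by simp
qed

lemma valid_cop_rule_captures_adjacent:
  assumes "valid_cop_rule V E \<sigma>" and "symp E"
    and "c \<in> V" "r \<in> V" "c \<noteq> r" "E c r"
  shows "\<sigma> i c r = r"
proof -
  let ?c' = "\<sigma> i c r"
  have c'_nbr: "?c' \<in> nbrs V E c" and dist: "gdist V E ?c' r + 1 = gdist V E c r"
    using assms(1,3-5) unfolding valid_cop_rule_def by blast+
  have edge: "walk_len V E 1 c r" using assms(3,4,6) by (rule walk_len_edge)
  have "walk_len V E (Suc 1) ?c' r"
  proof (rule walk_len.walkS[OF _ _ _ edge])
    show "?c' \<in> V" "E ?c' c" using c'_nbr \<open>symp E\<close> by (auto simp: nbrs_def dest: sympD)
  qed fact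
  moreover have "gdist V E ?c' r = 0"
    using gdist_le_walk_len[OF edge] dist by simp
  ultimately show ?thesis by (simp add: gdist_eq_0_iff)
qed

lemma nbrs_complete: "x \<in> V \<Longrightarrow> nbrs V (\<noteq>) x = V - {x}"
  by (auto simp: nbrs_def)

lemma deg_complete: "finite V \<Longrightarrow> x \<in> V \<Longrightarrow> deg V (\<noteq>) x = card V - 1"
  by (simp add: deg_def nbrs_complete)

lemma sum_nbrs_complete_avoiding:
  fixes f :: "'a \<Rightarrow> real"
  assumes "finite V" "x \<in> V" "z \<in> V" "z \<noteq> x"
    and const: "\<And>y. y \<in> V - {x, z} \<Longrightarrow> f y = K"
  shows "(\<Sum>y\<in>nbrs V (\<noteq>) x. if y = z then 0 else f y) = (real (card V) - 2) * K"
proof -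
  have "(\<Sum>y\<in>nbrs V (\<noteq>) x. if y = z then 0 else f y) = (\<Sum>y\<in>V - {x} - {z}. f y)"
    using assms(1-4) by (simp add: nbrs_complete sum.If_cases Diff_eq Int_commute)
  also have "\<dots> = (\<Sum>y\<in>V - {x, z}. K)"
    using const by (intro sum.cong) auto
  also have "\<dots> = (real (card V) - 2) * K"
  proof -
    have "card V \<ge> 2" using assms(1-4) card_mono[of V "{x, z}"] by simp
    then show ?thesis using assms(1-4) by (simp add: card_Diff_subset of_nat_diff)
  qed
  finally show ?thesis .
qed

text \<open>The exponent of \<open>\<theta>\<close> counts the cop moves among the next \<open>n\<close> moves.\<close>

lemma survive_complete:
  fixes V :: "'a set" and \<sigma> :: "nat \<Rightarrow> 'a \<Rightarrow> 'a \<Rightarrow> 'a"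
  defines "q \<equiv> (real (card V) - 2) / (real (card V) - 1)"
  assumes V: "finite V" and \<sigma>: "valid_cop_rule V (\<noteq>) \<sigma>"
  shows "c \<in> V \<Longrightarrow> r \<in> V \<Longrightarrow> c \<noteq> r \<Longrightarrow>
    survive V (\<noteq>) \<theta> \<sigma> n i c r = \<theta> ^ (if odd i then n div 2 else Suc n div 2) * q ^ n"
proof (induction n arbitrary: i c r)
  case 0
  then show ?case by simp
next
  case (Suc n)
  have "card V \<ge> 2"
    using Suc.prems card_mono[OF V, of "{c, r}"] by simp
  then have deg: "real (deg V (\<noteq>) x) = real (card V) - 1" if "x \<in> V" for x
    using deg_complete[OF V that] by (simp add: of_nat_diff)
  have q: "(real (card V) - 2) / (real (card V) - 1) = q" by (simp add: q_def)
  show ?case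
  proof (cases "odd i")
    case True
    have "(\<Sum>y\<in>nbrs V (\<noteq>) r. if y = c then 0 else survive V (\<noteq>) \<theta> \<sigma> n (Suc i) c y)
        = (real (card V) - 2) * (\<theta> ^ (Suc n div 2) * q ^ n)"
      using Suc True V by (intro sum_nbrs_complete_avoiding) auto
    then show ?thesis using True Suc.prems
      by (simp add: deg flip: q)
  next
    case False
    have "(\<Sum>y\<in>nbrs V (\<noteq>) c. if y = r then 0 else survive V (\<noteq>) \<theta> \<sigma> n (Suc i) y r)
        = (real (card V) - 2) * (\<theta> ^ (n div 2) * q ^ n)"
      using Suc False V by (intro sum_nbrs_complete_avoiding) auto
    moreover have "\<sigma> i c r = r"
      using valid_cop_rule_captures_adjacent[OF \<sigma>] Suc.prems by (simp add: symp_def)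
    ultimately show ?thesis using False Suc.prems
      by (simp add: deg flip: q)
  qed
qed

theorem mainTheorem1:
  fixes v :: nat and \<theta> :: real and \<sigma> :: "nat \<Rightarrow> nat \<Rightarrow> nat \<Rightarrow> nat" and c0 r0 m :: nat
  assumes "v \<ge> 2" and "0 \<le> \<theta>" and "\<theta> \<le> 1"
    and "c0 \<in> K_verts v" and "r0 \<in> K_verts v" and "c0 \<noteq> r0"
    and "valid_cop_rule (K_verts v) K_adj \<sigma>"
  shows "P_free (K_verts v) K_adj \<theta> \<sigma> c0 r0 m
         = \<theta> ^ (m div 2) * ((real v - 2) / (real v - 1)) ^ m"
proof -
  have K_adj: "K_adj = (\<noteq>)" by (intro ext) (simp add: K_adj_def)
  have "card (K_verts v) = v" "finite (K_verts v)" by (simp_all add: K_verts_def)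
  then show ?thesis
    using survive_complete[of "K_verts v" \<sigma> c0 r0 \<theta> m 1] assms(4-7)
    by (simp add: P_free_def K_adj)
qed

end
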